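(* Let $k\ge1$ and let $\lambda_{opt}=\min_{C}\max_{1\le i\le n}\min_{c\in C}\mathsf{E}\mathrm{d}(c,P_i)$, the minimum taken over all sets $C$ of $k$ points of $T$. Then either $\lambda_{opt}=\mathsf{E}\mathrm{d}(p_i^*,P_i)$ for some $i$, or there exist indices $i,j$ and a point $c_{ij}$ on the path $\pi(p_i^*,p_j^* )$ with $\mathsf{E}\mathrm{d}(c_{ij},P_i)=\mathsf{E}\mathrm{d}(c_{ij},P_j)$ such that $\lambda_{opt}=\mathsf{E}\mathrm{d}(c_{ij},P_i)=\mathsf{E}\mathrm{d}(c_{ij},P_j)$.
   Context: $T$ is a tree with positive edge lengths, edges regarded as segments; $\pi(p,q)$ is the simple path between points $p,q$ and $d$ the path-length distance. Uncertain point $P_i$ ($1\le i\le n$) has weight $w_i\ge0$, locations $p_{ij}$ and probabilities $f_{ij}\ge0$ summing to $1$; $\mathsf{E}\mathrm{d}(x,P_i)=w_i\sum_j f_{ij}d(x,p_{ij})$. $p_i^*$ is a vertex of $T$ minimizing $\mathsf{E}\mathrm{d}(\cdot,P_i)$ over $T$ (the median of $P_i$). As $x$ moves along $\pi(p_i^*,p_j^* )$ from $p_i^*$ to $p_j^*$, $\mathsf{E}\mathrm{d}(x,P_i)$ is nondecreasing and $\mathsf{E}\mathrm{d}(x,P_j)$ is nonincreasing. *)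

theory Defs
  imports Complex_Main
begin

definition walk :: "'v set set \<Rightarrow> 'v list \<Rightarrow> bool" where
  "walk E xs \<longleftrightarrow> xs \<noteq> [] \<and> (\<forall>i < length xs - 1. {xs ! i, xs ! Suc i} \<in> E)"

definition is_cycle :: "'v set set \<Rightarrow> 'v list \<Rightarrow> bool" where
  "is_cycle E xs \<longleftrightarrow> walk E xs \<and> distinct xs \<and> length xs \<ge> 3 \<and> {last xs, hd xs} \<in> E"

definition is_tree :: "'v set \<Rightarrow> 'v set set \<Rightarrow> ('v set \<Rightarrow> real) \<Rightarrow> bool" where
  "is_tree V E len \<longleftrightarrow> finite V \<and> V \<noteq> {}
     \<and> (\<forall>e\<in>E. \<exists>u v. e = {u, v} \<and> u \<in> V \<and> v \<in> V \<and> u \<noteq> v)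
     \<and> (\<forall>e\<in>E. len e > 0)
     \<and> (\<forall>u\<in>V. \<forall>v\<in>V. \<exists>xs. walk E xs \<and> hd xs = u \<and> last xs = v)
     \<and> (\<nexists>xs. is_cycle E xs)"

definition walk_len :: "('v set \<Rightarrow> real) \<Rightarrow> 'v list \<Rightarrow> real" where
  "walk_len len xs = (\<Sum>i < length xs - 1. len {xs ! i, xs ! Suc i})"

text \<open>Path-length distance between vertices (length of the shortest walk,
which in a tree is the length of the unique simple path).\<close>
definition dV :: "'v set set \<Rightarrow> ('v set \<Rightarrow> real) \<Rightarrow> 'v \<Rightarrow> 'v \<Rightarrow> real" where
  "dV E len a b = Inf {walk_len len xs | xs. walk E xs \<and> hd xs = a \<and> last xs = b}"

text \<open>Points of T: a triple (u, v, t) with {u,v} an edge and 0 <= t <= len {u,v}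
denotes the point of the edge segment uv at distance t from u; the triple
(u, u, 0) with u a vertex denotes the vertex u itself.\<close>
type_synonym 'v point = "'v \<times> 'v \<times> real"

definition vpt :: "'v \<Rightarrow> 'v point" where
  "vpt u = (u, u, 0)"

definition pts :: "'v set \<Rightarrow> 'v set set \<Rightarrow> ('v set \<Rightarrow> real) \<Rightarrow> 'v point set" where
  "pts V E len = {(u, v, t). {u, v} \<in> E \<and> 0 \<le> t \<and> t \<le> len {u, v}} \<union> vpt ` V"

definition seglen :: "('v set \<Rightarrow> real) \<Rightarrow> 'v point \<Rightarrow> real" where
  "seglen len p = (case p of (u, v, t) \<Rightarrow> if u = v then 0 else len {u, v})"

definition dPV :: "'v set set \<Rightarrow> ('v set \<Rightarrow> real) \<Rightarrow> 'v point \<Rightarrow> 'v \<Rightarrow> real" where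
  "dPV E len p a = (case p of (u, v, t) \<Rightarrow>
      min (t + dV E len u a) (seglen len p - t + dV E len v a))"

definition dist_T :: "'v set set \<Rightarrow> ('v set \<Rightarrow> real) \<Rightarrow> 'v point \<Rightarrow> 'v point \<Rightarrow> real" where
  "dist_T E len p q = (case p of (u, v, t) \<Rightarrow> case q of (u', v', t') \<Rightarrow>
      (let via = min (t + dPV E len q u) (seglen len p - t + dPV E len q v) in
       if u \<noteq> v \<and> {u, v} = {u', v'}
       then min via (if u = u' then \<bar>t - t'\<bar> else \<bar>t - (seglen len p - t')\<bar>)
       else via))"

text \<open>A point c lies on the simple path pi(p,q): in a tree this is exactly
d(p,c) + d(c,q) = d(p,q).\<close>
definition on_path :: "'v set set \<Rightarrow> ('v set \<Rightarrow> real) \<Rightarrow> 'v point \<Rightarrow> 'v point \<Rightarrow> 'v point \<Rightarrow> bool" where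
  "on_path E len p q c \<longleftrightarrow> dist_T E len p c + dist_T E len c q = dist_T E len p q"

text \<open>Uncertain point P_i: weight w i, m i locations loc i j (j < m i) with
probabilities f i j.\<close>
definition Ed :: "'v set set \<Rightarrow> ('v set \<Rightarrow> real) \<Rightarrow> (nat \<Rightarrow> real) \<Rightarrow> (nat \<Rightarrow> nat)
   \<Rightarrow> (nat \<Rightarrow> nat \<Rightarrow> 'v point) \<Rightarrow> (nat \<Rightarrow> nat \<Rightarrow> real) \<Rightarrow> 'v point \<Rightarrow> nat \<Rightarrow> real" where
  "Ed E len w m loc f x i = w i * (\<Sum>j < m i. f i j * dist_T E len x (loc i j))"

text \<open>The k-center objective and its optimum (over all sets of at most k points;
for a tree with at least one edge this equals the minimum over sets of exactly k points).\<close>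
definition kcost :: "'v set set \<Rightarrow> ('v set \<Rightarrow> real) \<Rightarrow> nat \<Rightarrow> (nat \<Rightarrow> real) \<Rightarrow> (nat \<Rightarrow> nat)
   \<Rightarrow> (nat \<Rightarrow> nat \<Rightarrow> 'v point) \<Rightarrow> (nat \<Rightarrow> nat \<Rightarrow> real) \<Rightarrow> 'v point set \<Rightarrow> real" where
  "kcost E len n w m loc f C = Max ((\<lambda>i. Min ((\<lambda>c. Ed E len w m loc f c i) ` C)) ` {1..n})"

definition lambda_opt :: "'v set \<Rightarrow> 'v set set \<Rightarrow> ('v set \<Rightarrow> real) \<Rightarrow> nat \<Rightarrow> nat \<Rightarrow> (nat \<Rightarrow> real)
   \<Rightarrow> (nat \<Rightarrow> nat) \<Rightarrow> (nat \<Rightarrow> nat \<Rightarrow> 'v point) \<Rightarrow> (nat \<Rightarrow> nat \<Rightarrow> real) \<Rightarrow> real" where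
  "lambda_opt V E len k n w m loc f =
     Inf (kcost E len n w m loc f ` {C. C \<subseteq> pts V E len \<and> C \<noteq> {} \<and> finite C \<and> card C \<le> k})"

end

theory Submission
  imports Defs
begin

text \<open>The optimal k-center value is the optimal 1-center value of some group I of uncertain
  points, namely of a group of points sharing their nearest center in an optimal solution.
  Let x minimise the largest expected distance over I. If that maximum were attained neither
  at the median of a maximising P_i nor at a balancing point on the path between the medians of
  two maximising uncertain points, then the medians of all maximising uncertain points would lie
  beyond x in one direction. Expected distance is convex along paths of a tree, so a small step
  from x in that direction would lower all maximal costs and keep the others below the maximum,
  contradicting the choice of x.\<close>

lemma eventually_small_step: "(0::real) < c \<Longrightarrow> eventually (\<lambda>s. 0 < s \<and> s < c) (at_right 0)"
  using eventually_at_right_real[of 0 c] by (rule eventually_mono) auto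

lemma continuous_on_Max_image:
  fixes G :: "'i \<Rightarrow> 'a::topological_space \<Rightarrow> 'b::linorder_topology"
  assumes "finite I" "I \<noteq> {}" "\<And>i. i \<in> I \<Longrightarrow> continuous_on S (G i)"
  shows "continuous_on S (\<lambda>s. Max ((\<lambda>i. G i s) ` I))"
  using assms
proof (induction I rule: finite_ne_induct)
  case (insert x F)
  then have "continuous_on S (\<lambda>s. max (G x s) (Max ((\<lambda>i. G i s) ` F)))"
    by (intro continuous_on_max) auto
  then show ?case using insert by simp
qed simp

section \<open>Walks as vertex lists\<close>

fun edge_chain :: "'v set set \<Rightarrow> 'v list \<Rightarrow> bool" where
  "edge_chain E (x # y # r) \<longleftrightarrow> {x, y} \<in> E \<and> edge_chain E (y # r)"
| "edge_chain E _ \<longleftrightarrow> True"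

fun path_len :: "('v set \<Rightarrow> real) \<Rightarrow> 'v list \<Rightarrow> real" where
  "path_len len (x # y # r) = len {x, y} + path_len len (y # r)"
| "path_len len _ = 0"

fun path_edges :: "'v list \<Rightarrow> 'v set set" where
  "path_edges (x # y # r) = insert {x, y} (path_edges (y # r))"
| "path_edges _ = {}"

lemma walk_iff_edge_chain: "walk E xs \<longleftrightarrow> xs \<noteq> [] \<and> edge_chain E xs"
proof (induction E xs rule: edge_chain.induct)
  case (1 E x y r)
  then show ?case unfolding walk_def by (auto simp: All_less_Suc2)
qed (auto simp: walk_def)

lemma walk_len_eq_path_len: "walk_len len xs = path_len len xs"
proof (induction len xs rule: path_len.induct)
  case (1 len x y r)
  have "walk_len len (x # y # r) = (\<Sum>i<Suc (length r). len {(x # y # r) ! i, (x # y # r) ! Suc i})"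
    unfolding walk_len_def by simp
  also have "\<dots> = len {x, y} + walk_len len (y # r)"
    unfolding walk_len_def by (subst sum.lessThan_Suc_shift) simp
  finally show ?case using 1 by simp
qed (auto simp: walk_len_def)

lemma edge_chain_append:
  "edge_chain E (xs @ ys) \<longleftrightarrow>
     edge_chain E xs \<and> edge_chain E ys \<and> (xs \<noteq> [] \<and> ys \<noteq> [] \<longrightarrow> {last xs, hd ys} \<in> E)"
proof (induction xs)
  case (Cons x xs) then show ?case by (cases xs; cases ys) auto
qed simp

lemma path_len_append:
  "path_len len (xs @ ys) =
     path_len len xs + path_len len ys + (if xs \<noteq> [] \<and> ys \<noteq> [] then len {last xs, hd ys} else 0)"
proof (induction xs)
  case (Cons x xs) then show ?case by (cases xs; cases ys) auto
qed simp

lemma path_edges_append: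
  "path_edges (xs @ ys) =
     path_edges xs \<union> path_edges ys \<union> (if xs \<noteq> [] \<and> ys \<noteq> [] then {{last xs, hd ys}} else {})"
proof (induction xs)
  case (Cons x xs) then show ?case by (cases xs; cases ys) auto
qed simp

lemma edge_chain_rev: "edge_chain E (rev xs) \<longleftrightarrow> edge_chain E xs"
  by (induction xs rule: edge_chain.induct) (auto simp: edge_chain_append insert_commute)

lemma path_len_rev: "path_len len (rev xs) = path_len len xs"
  by (induction xs rule: induct_list012) (auto simp: path_len_append insert_commute)

lemma path_edges_rev: "path_edges (rev xs) = path_edges xs"
  by (induction xs rule: induct_list012) (auto simp: path_edges_append insert_commute)

lemma path_edges_subset_set: "e \<in> path_edges xs \<Longrightarrow> e \<subseteq> set xs"
  by (induction xs rule: path_edges.induct) auto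

lemma path_edges_split:
  "e \<in> path_edges xs \<Longrightarrow> \<exists>pre x y post. xs = pre @ x # y # post \<and> e = {x, y}"
proof (induction xs rule: path_edges.induct)
  case (1 x y r)
  show ?case
  proof (cases "e = {x, y}")
    case True then show ?thesis by (metis append_Nil)
  next
    case False
    with 1 obtain pre a b post where "y # r = pre @ a # b # post" "e = {a, b}" by auto
    then show ?thesis by (metis append_Cons)
  qed
qed auto

section \<open>Distances between vertices\<close>

locale weighted_tree =
  fixes V :: "'v set" and E :: "'v set set" and len :: "'v set \<Rightarrow> real"
  assumes tree: "is_tree V E len"
begin

abbreviation dv where "dv \<equiv> dV E len"

lemma finite_V: "finite V" and V_nonempty: "V \<noteq> {}"
  and edge_E: "e \<in> E \<Longrightarrow> \<exists>u v. e = {u, v} \<and> u \<in> V \<and> v \<in> V \<and> u \<noteq> v"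
  and len_pos: "e \<in> E \<Longrightarrow> len e > 0"
  and connected: "u \<in> V \<Longrightarrow> v \<in> V \<Longrightarrow> \<exists>xs. walk E xs \<and> hd xs = u \<and> last xs = v"
  and no_cycle: "\<not> is_cycle E xs"
  using tree unfolding is_tree_def by blast+

lemma edge_endpoints: "{a, b} \<in> E \<Longrightarrow> a \<in> V \<and> b \<in> V \<and> a \<noteq> b"
  using edge_E[of "{a, b}"] by (auto simp: doubleton_eq_iff)

lemma edge_chain_subset_V: "edge_chain E xs \<Longrightarrow> hd xs \<in> V \<Longrightarrow> set xs \<subseteq> V"
  by (induction xs rule: induct_list012) (auto dest: edge_endpoints)

lemma path_len_nonneg: "edge_chain E xs \<Longrightarrow> path_len len xs \<ge> 0"
  by (induction xs rule: induct_list012) (auto dest!: len_pos)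

lemma edge_chain_shortcut:
  assumes "edge_chain E xs" "xs \<noteq> []"
  shows "\<exists>ys. edge_chain E ys \<and> distinct ys \<and> ys \<noteq> [] \<and> hd ys = hd xs \<and> last ys = last xs
     \<and> path_len len ys \<le> path_len len xs \<and> path_edges ys \<subseteq> path_edges xs"
  using assms
proof (induction xs)
  case (Cons x xs)
  show ?case
  proof (cases xs)
    case Nil then show ?thesis by (intro exI[of _ "[x]"]) auto
  next
    case (Cons y r)
    with Cons.prems have ch: "edge_chain E xs" "{x, y} \<in> E" by auto
    with Cons.IH Cons obtain ys where ys: "edge_chain E ys" "distinct ys" "ys \<noteq> []" "hd ys = y"
      "last ys = last xs" "path_len len ys \<le> path_len len xs" "path_edges ys \<subseteq> path_edges xs"
      by auto
    have step: "path_len len xs \<le> path_len len (x # xs)" "path_edges xs \<subseteq> path_edges (x # xs)"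
      using Cons ch len_pos[of "{x, y}"] by auto
    show ?thesis
    proof (cases "x \<in> set ys")
      case False
      obtain r' where r': "ys = y # r'" using ys(3,4) by (cases ys) auto
      show ?thesis using False ys r' Cons ch by (intro exI[of _ "x # ys"]) auto
    next
      case True
      then obtain pre post where pp: "ys = pre @ x # post" by (meson split_list)
      have "path_len len (x # post) \<le> path_len len ys"
        using pp path_len_append[of len pre "x # post"] path_len_nonneg[of pre] ys(1)
        by (auto simp: edge_chain_append dest!: len_pos split: if_splits)
      moreover have "path_edges (x # post) \<subseteq> path_edges ys" using pp by (auto simp: path_edges_append)
      ultimately show ?thesis using ys pp step Cons
        by (intro exI[of _ "x # post"]) (auto simp: edge_chain_append)
    qed
  qed
qed simp

lemma edge_in_every_chain:
  assumes e: "{u, v} \<in> E"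
    and xs: "edge_chain E xs" "xs \<noteq> []" "hd xs = u" "last xs = v"
  shows "{u, v} \<in> path_edges xs"
proof (rule ccontr)
  assume av: "{u, v} \<notin> path_edges xs"
  obtain ys where ys: "edge_chain E ys" "distinct ys" "ys \<noteq> []" "hd ys = u" "last ys = v"
    "path_edges ys \<subseteq> path_edges xs" using edge_chain_shortcut[OF xs(1,2)] xs by auto
  have "length ys \<ge> 3"
  proof (rule ccontr)
    assume "\<not> 3 \<le> length ys"
    then consider "ys = [u]" | "ys = [u, v]" using ys(3,4,5)
      by (cases ys; cases "tl ys"; cases "tl (tl ys)") auto
    then show False using edge_endpoints[OF e] av ys by cases auto
  qed
  then have "is_cycle E ys" unfolding is_cycle_def using ys e
    by (auto simp: walk_iff_edge_chain insert_commute)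
  then show False using no_cycle by blast
qed

definition walks :: "'v \<Rightarrow> 'v \<Rightarrow> 'v list set" where
  "walks a b = {xs. walk E xs \<and> hd xs = a \<and> last xs = b}"

lemma walks_iff: "xs \<in> walks a b \<longleftrightarrow> edge_chain E xs \<and> xs \<noteq> [] \<and> hd xs = a \<and> last xs = b"
  unfolding walks_def walk_iff_edge_chain by auto

lemma dV_eq_Inf: "dv a b = Inf (path_len len ` walks a b)"
  unfolding dV_def walks_def walk_len_eq_path_len by (rule arg_cong[where f = Inf]) auto

lemma dV_le_path_len: "xs \<in> walks a b \<Longrightarrow> dv a b \<le> path_len len xs"
  unfolding dV_eq_Inf
  by (rule cInf_lower) (auto intro!: bdd_belowI[of _ 0] path_len_nonneg simp: walks_iff)

text \<open>Simple walks are finitely many, and shortcutting never makes a walk longer.\<close>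
lemma shortest_walk:
  assumes "a \<in> V" "b \<in> V"
  obtains xs where "xs \<in> walks a b" "path_len len xs = dv a b"
proof -
  define S where "S = {xs \<in> walks a b. distinct xs}"
  have shortcut: "\<exists>ys\<in>S. path_len len ys \<le> path_len len xs" if "xs \<in> walks a b" for xs
    using that edge_chain_shortcut[of xs] unfolding S_def walks_iff by fastforce
  have "S \<subseteq> {xs. set xs \<subseteq> V \<and> length xs \<le> card V}"
  proof
    fix xs assume "xs \<in> S"
    then have "set xs \<subseteq> V" "distinct xs"
      using edge_chain_subset_V assms unfolding S_def walks_iff by auto
    then show "xs \<in> {xs. set xs \<subseteq> V \<and> length xs \<le> card V}"
      using card_mono[OF finite_V] by (auto simp: distinct_card[symmetric])
  qed
  then have fin: "finite S" using finite_lists_length_le[OF finite_V] by (rule finite_subset)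
  obtain xs0 where "xs0 \<in> walks a b" using connected assms unfolding walks_def by blast
  then have ne: "S \<noteq> {}" using shortcut by blast
  have "Min (path_len len ` S) \<in> path_len len ` S" using fin ne by simp
  then obtain z where z: "z \<in> S" "path_len len z = Min (path_len len ` S)" by auto
  have "dv a b = path_len len z"
  proof (rule antisym)
    show "dv a b \<le> path_len len z" using z(1) dV_le_path_len unfolding S_def by blast
    show "path_len len z \<le> dv a b" unfolding dV_eq_Inf
    proof (rule cInf_greatest)
      show "path_len len ` walks a b \<noteq> {}" using z unfolding S_def by auto
    next
      fix r assume "r \<in> path_len len ` walks a b"
      then obtain xs where "xs \<in> walks a b" "r = path_len len xs" by blast
      moreover obtain ys where "ys \<in> S" "path_len len ys \<le> path_len len xs"
        using shortcut[OF \<open>xs \<in> walks a b\<close>] by blast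
      moreover have "path_len len z \<le> path_len len ys" using z(2) fin \<open>ys \<in> S\<close> by simp
      ultimately show "path_len len z \<le> r" by simp
    qed
  qed
  then show ?thesis using that z unfolding S_def by auto
qed

lemma dV_nonneg: "a \<in> V \<Longrightarrow> b \<in> V \<Longrightarrow> dv a b \<ge> 0"
  by (metis shortest_walk path_len_nonneg walks_iff)

lemma dV_refl: "dv a a = 0"
proof -
  have "[a] \<in> walks a a" by (simp add: walks_iff)
  then have "dv a a \<le> 0" using dV_le_path_len by fastforce
  moreover have "dv a a \<ge> 0" unfolding dV_eq_Inf
  proof (rule cInf_greatest)
    show "path_len len ` walks a a \<noteq> {}" using \<open>[a] \<in> walks a a\<close> by blast
  qed (auto simp: walks_iff path_len_nonneg)
  ultimately show ?thesis by simp
qed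

lemma rev_walks: "xs \<in> walks a b \<Longrightarrow> rev xs \<in> walks b a"
  by (auto simp: walks_iff edge_chain_rev hd_rev last_rev)

lemma dV_sym: "a \<in> V \<Longrightarrow> b \<in> V \<Longrightarrow> dv a b = dv b a"
proof -
  have le: "dv a b \<le> dv b a" if ab: "a \<in> V" "b \<in> V" for a b
  proof -
    obtain xs where "xs \<in> walks b a" "path_len len xs = dv b a" using shortest_walk ab by blast
    then show ?thesis using dV_le_path_len[OF rev_walks] path_len_rev by metis
  qed
  show "a \<in> V \<Longrightarrow> b \<in> V \<Longrightarrow> dv a b = dv b a" using le[of a b] le[of b a] by simp
qed

lemma walks_join:
  assumes "xs \<in> walks a b" "ys \<in> walks b c"
  shows "xs @ tl ys \<in> walks a c"
    and "path_len len (xs @ tl ys) = path_len len xs + path_len len ys"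
    and "path_edges (xs @ tl ys) = path_edges xs \<union> path_edges ys"
proof -
  obtain r where ys: "ys = b # r" using assms(2) by (cases ys) (auto simp: walks_iff)
  have xs: "xs \<noteq> []" "last xs = b" using assms(1) by (auto simp: walks_iff)
  have r: "r \<noteq> [] \<Longrightarrow> {b, hd r} \<in> E \<and> edge_chain E r" using assms(2) ys
    by (cases r) (auto simp: walks_iff)
  show "xs @ tl ys \<in> walks a c" using assms xs ys r
    by (cases "r = []") (auto simp: walks_iff edge_chain_append)
  show "path_len len (xs @ tl ys) = path_len len xs + path_len len ys" using xs ys
    by (cases r) (auto simp: path_len_append)
  show "path_edges (xs @ tl ys) = path_edges xs \<union> path_edges ys" using xs ys
    by (cases r) (auto simp: path_edges_append)
qed

lemma dV_triangle:
  assumes "a \<in> V" "b \<in> V" "c \<in> V"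
  shows "dv a c \<le> dv a b + dv b c"
proof -
  obtain xs where xs: "xs \<in> walks a b" "path_len len xs = dv a b" using shortest_walk assms by blast
  obtain ys where ys: "ys \<in> walks b c" "path_len len ys = dv b c" using shortest_walk assms by blast
  show ?thesis using dV_le_path_len[OF walks_join(1)[OF xs(1) ys(1)]] walks_join(2)[OF xs(1) ys(1)] xs ys
    by simp
qed

lemma dV_edge_le: "{a, b} \<in> E \<Longrightarrow> dv a b \<le> len {a, b}"
  using dV_le_path_len[of "[a, b]"] by (simp add: walks_iff)

lemma walks_subset_V: "xs \<in> walks a b \<Longrightarrow> a \<in> V \<Longrightarrow> set xs \<subseteq> V \<and> b \<in> V"
  using edge_chain_subset_V last_in_set by (fastforce simp: walks_iff)

lemma dV_split_at_edge:
  assumes xs: "xs \<in> walks a b" "path_len len xs = dv a b" and split: "xs = pre @ x # y # post"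
    and a: "a \<in> V"
  shows "dv a b = dv a x + len {x, y} + dv y b"
proof -
  have V: "x \<in> V" "y \<in> V" "b \<in> V" using walks_subset_V[OF xs(1) a] split by auto
  have e: "{x, y} \<in> E" using xs split by (simp add: walks_iff edge_chain_append)
  have chain: "edge_chain E ((pre @ [x]) @ y # post)" "hd xs = a" "last xs = b"
    using xs split by (auto simp: walks_iff)
  then have w1: "pre @ [x] \<in> walks a x" using split
    unfolding walks_iff edge_chain_append by (cases pre) auto
  have w2: "y # post \<in> walks y b" using chain split
    unfolding walks_iff edge_chain_append by auto
  have "path_len len xs = path_len len (pre @ [x]) + len {x, y} + path_len len (y # post)"
    using split path_len_append[of len "pre @ [x]" "y # post"] by auto
  then have "dv a b \<ge> dv a x + len {x, y} + dv y b"
    using dV_le_path_len[OF w1] dV_le_path_len[OF w2] xs by linarith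
  moreover have "dv a b \<le> dv a x + len {x, y} + dv y b"
    using dV_triangle[of a x b] dV_triangle[of x y b] dV_edge_le[OF e] V a by auto
  ultimately show ?thesis by linarith
qed

lemma dV_split_at_vertex:
  assumes xs: "xs \<in> walks a b" "path_len len xs = dv a b" and z: "z \<in> set xs"
    and a: "a \<in> V"
  shows "dv a b = dv a z + dv z b"
proof -
  obtain pre post where split: "xs = pre @ z # post" using z by (meson split_list)
  show ?thesis
  proof (cases post)
    case Nil
    then have "z = b" using xs(1) split by (simp add: walks_iff)
    then show ?thesis by (simp add: dV_refl)
  next
    case (Cons y post')
    have V: "z \<in> V" "y \<in> V" "b \<in> V" using walks_subset_V[OF xs(1) a] split Cons by auto
    have "{z, y} \<in> E" using xs split Cons by (simp add: walks_iff edge_chain_append)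
    then have "dv z b \<le> len {z, y} + dv y b" using dV_triangle[of z y b] dV_edge_le V by fastforce
    moreover have "dv a b = dv a z + len {z, y} + dv y b"
      using dV_split_at_edge[OF xs, of pre z y post'] split Cons a by simp
    moreover have "dv a b \<le> dv a z + dv z b" using dV_triangle[of a z b] V a by simp
    ultimately show ?thesis by linarith
  qed
qed

text \<open>Removing the edge ab splits the tree into the part of a and the part of b;
  \<open>side a b z\<close> says that z lies in the part of a.\<close>
definition side :: "'v \<Rightarrow> 'v \<Rightarrow> 'v \<Rightarrow> bool" where
  "side a b z \<longleftrightarrow> dv b z = len {a, b} + dv a z"

lemma shortest_walk_through_first_edge:
  assumes xs: "xs \<in> walks u z" "path_len len xs = dv u z" and u: "u \<in> V"
    and e: "{u, v} \<in> path_edges xs"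
  shows "dv u z = len {u, v} + dv v z"
proof -
  obtain pre x y post where split: "xs = pre @ x # y # post" "{u, v} = {x, y}"
    using path_edges_split[OF e] by blast
  have uz: "dv u z = dv u x + len {x, y} + dv y z" using dV_split_at_edge[OF xs split(1) u] .
  have "{u, v} \<in> E" using xs split by (simp add: walks_iff edge_chain_append)
  then have pos: "len {u, v} > 0" "dv u v \<ge> 0" using len_pos dV_nonneg edge_endpoints by auto
  from split(2) consider "x = u" "y = v" | "x = v" "y = u" by (auto simp: doubleton_eq_iff)
  then show ?thesis
  proof cases
    case 2
    then have "dv u z = dv u v + len {u, v} + dv u z" using uz by (simp add: insert_commute)
    then show ?thesis using pos by linarith
  qed (use uz dV_refl in simp)
qed

lemma side_cases:
  assumes e: "{a, b} \<in> E" and z: "z \<in> V"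
  shows "side a b z \<or> side b a z"
proof -
  have V: "a \<in> V" "b \<in> V" using edge_endpoints[OF e] by auto
  obtain xs where xs: "xs \<in> walks a z" "path_len len xs = dv a z" using shortest_walk V z by blast
  obtain ys where ys: "ys \<in> walks b z" "path_len len ys = dv b z" using shortest_walk V z by blast
  note join = walks_join[OF xs(1) rev_walks[OF ys(1)]]
  have "{a, b} \<in> path_edges xs \<union> path_edges ys"
    using edge_in_every_chain[OF e] join(1) join(3) by (auto simp: walks_iff path_edges_rev)
  moreover have "{b, a} = {a, b}" by blast
  ultimately show ?thesis
    using shortest_walk_through_first_edge[OF xs V(1), of b] shortest_walk_through_first_edge[OF ys V(2), of a]
    unfolding side_def by auto
qed

lemma side_not_both: "{a, b} \<in> E \<Longrightarrow> side a b z \<Longrightarrow> \<not> side b a z"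
  unfolding side_def insert_commute[of b a] using len_pos[of "{a, b}"] by linarith

lemma dV_edge:
  assumes e: "{a, b} \<in> E"
  shows "dv a b = len {a, b}"
proof -
  have b: "b \<in> V" and "a \<in> V" using edge_endpoints[OF e] by auto
  then have "dv a b \<ge> 0" "len {a, b} > 0" using dV_nonneg len_pos e by auto
  moreover have "side b a b \<Longrightarrow> dv a b = len {a, b}"
    unfolding side_def insert_commute[of b a] dV_refl by simp
  moreover have "side a b b \<Longrightarrow> dv a b = - len {a, b}"
    unfolding side_def dV_refl by simp
  ultimately show ?thesis using side_cases[OF e b] by force
qed

lemma side_edge_adjacent:
  assumes ab: "{a, b} \<in> E" and xy: "{x, y} \<in> E" and ne: "{x, y} \<noteq> {a, b}"
    and ax: "side a b x"
  shows "side a b y"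
proof (rule ccontr)
  assume "\<not> side a b y"
  have V: "a \<in> V" "b \<in> V" "x \<in> V" "y \<in> V" using edge_endpoints ab xy by auto
  then have "side b a y" using side_cases[OF ab] \<open>\<not> side a b y\<close> by blast
  have L: "len {a, b} > 0" "dv a b = len {a, b}" "{b, a} = {a, b}" using len_pos ab dV_edge by auto
  obtain P where P: "P \<in> walks a x" "path_len len P = dv a x" using shortest_walk V by blast
  obtain Q where Q: "Q \<in> walks y b" "path_len len Q = dv y b" using shortest_walk V by blast
  have "{a, b} \<notin> path_edges P"
  proof
    assume "{a, b} \<in> path_edges P"
    then have "dv a x = dv a b + dv b x"
      using dV_split_at_vertex[OF P] path_edges_subset_set V by blast
    then show False using ax L unfolding side_def by linarith
  qed
  moreover have "{a, b} \<notin> path_edges Q"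
  proof
    assume "{a, b} \<in> path_edges Q"
    then have "dv y b = dv y a + dv a b"
      using dV_split_at_vertex[OF Q] path_edges_subset_set V by blast
    then show False using \<open>side b a y\<close> L dV_sym V unfolding side_def by simp
  qed
  moreover have xy_walk: "[x, y] \<in> walks x y" using xy by (simp add: walks_iff)
  note PQ = walks_join[OF walks_join(1)[OF P(1) xy_walk] Q(1)]
  have "{a, b} \<in> path_edges ((P @ tl [x, y]) @ tl Q)"
    using edge_in_every_chain[OF ab] PQ(1) by (simp add: walks_iff)
  ultimately show False
    using PQ(3) walks_join(3)[OF P(1) xy_walk] ne by auto
qed

lemma side_along_chain:
  assumes ab: "{a, b} \<in> E"
  shows "edge_chain E xs \<Longrightarrow> xs \<noteq> [] \<Longrightarrow> {a, b} \<notin> path_edges xs \<Longrightarrow> side a b (hd xs)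
    \<Longrightarrow> side a b (last xs)"
proof (induction xs)
  case (Cons x xs)
  show ?case
  proof (cases xs)
    case (Cons y zs)
    have "{x, y} \<in> E" "{x, y} \<noteq> {a, b}" using Cons.prems Cons by auto
    then have "side a b y" using side_edge_adjacent[OF ab] Cons.prems by simp
    moreover have "edge_chain E xs" "{a, b} \<notin> path_edges xs" using Cons.prems Cons by auto
    ultimately show ?thesis using Cons.IH Cons by simp
  qed (use Cons.prems in simp)
qed simp

lemma dV_across_edge:
  assumes ab: "{a, b} \<in> E" and pq: "p \<in> V" "q \<in> V" and ap: "side a b p" and bq: "side b a q"
  shows "dv p q = dv p a + len {a, b} + dv b q"
proof -
  have V: "a \<in> V" "b \<in> V" using edge_endpoints ab by auto
  obtain xs where xs: "xs \<in> walks p q" "path_len len xs = dv p q" using shortest_walk pq by blast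
  have "{a, b} \<in> path_edges xs"
  proof (rule ccontr)
    assume "{a, b} \<notin> path_edges xs"
    then have "side a b q" using side_along_chain[OF ab] xs(1) ap by (auto simp: walks_iff)
    then show False using side_not_both[OF _ bq] ab by (simp add: insert_commute)
  qed
  then obtain pre x y post where split: "xs = pre @ x # y # post" "{a, b} = {x, y}"
    using path_edges_split by blast
  have pq_split: "dv p q = dv p x + len {x, y} + dv y q" using dV_split_at_edge[OF xs split(1) pq(1)] .
  from split(2) consider "x = a" "y = b" | "x = b" "y = a" by (auto simp: doubleton_eq_iff)
  then show ?thesis
  proof cases
    case 2
    have "dv p b = len {a, b} + dv p a" "dv a q = len {a, b} + dv b q"
      using ap bq dV_sym V pq unfolding side_def by (simp_all add: insert_commute)
    moreover have "dv p q \<le> dv p a + dv a b + dv b q"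
      using dV_triangle[of p a q] dV_triangle[of a b q] V pq by linarith
    ultimately show ?thesis using pq_split 2 len_pos[OF ab] dV_edge[OF ab] by (simp add: insert_commute)
  qed (use pq_split in simp)
qed

lemma first_step_towards:
  assumes c: "c \<in> V" and p: "p \<in> V" and ne: "c \<noteq> p"
  obtains c' where "{c, c'} \<in> E" "side c' c p"
proof -
  obtain xs where xs: "xs \<in> walks c p" "path_len len xs = dv c p" using shortest_walk c p by blast
  obtain c' r where split: "xs = [] @ c # c' # r"
  proof (cases xs)
    case (Cons x t)
    then show ?thesis using xs(1) ne that by (cases t) (auto simp: walks_iff)
  qed (use xs(1) in \<open>simp add: walks_iff\<close>)
  have "{c, c'} \<in> E" using xs(1) split by (simp add: walks_iff)
  moreover have "dv c p = len {c, c'} + dv c' p"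
    using dV_split_at_edge[OF xs split c] dV_refl by simp
  ultimately show ?thesis using that unfolding side_def by (simp add: insert_commute)
qed

section \<open>Points of the tree\<close>

abbreviation dT where "dT \<equiv> dist_T E len"
abbreviation dP where "dP \<equiv> dPV E len"

lemma pts_triple:
  assumes "(u, v, t) \<in> pts V E len"
  shows "u \<in> V" "v \<in> V" "0 \<le> t" "t \<le> seglen len (u, v, t)" "u \<noteq> v \<Longrightarrow> {u, v} \<in> E"
  using assms edge_endpoints[of u v] by (auto simp: pts_def vpt_def seglen_def)

lemma pts_edge: "{a, b} \<in> E \<Longrightarrow> 0 \<le> t \<Longrightarrow> t \<le> len {a, b} \<Longrightarrow> (a, b, t) \<in> pts V E len"
  by (simp add: pts_def)

lemma vpt_in_pts: "c \<in> V \<Longrightarrow> vpt c \<in> pts V E len"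
  by (simp add: pts_def)

lemma dPV_vpt: "dP (vpt c) x = dv c x"
  by (simp add: dPV_def vpt_def seglen_def)

lemma dist_T_vpt: "dT (vpt c) q = dP q c"
  by (cases q) (simp add: dist_T_def vpt_def seglen_def Let_def)

lemma dPV_triple: "dP (u, v, t) x = min (t + dv u x) (seglen len (u, v, t) - t + dv v x)"
  by (simp add: dPV_def)

lemma dPV_nonneg:
  assumes q: "q \<in> pts V E len" and x: "x \<in> V"
  shows "dP q x \<ge> 0"
proof -
  obtain u v t where q3: "q = (u, v, t)" by (cases q)
  note uvt = pts_triple[OF q[unfolded q3]]
  have "dv u x \<ge> 0" "dv v x \<ge> 0" using dV_nonneg uvt x by auto
  then show ?thesis using uvt unfolding q3 dPV_triple by simp
qed

lemma dPV_triangle: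
  assumes q: "q \<in> pts V E len" and a: "a \<in> V" and p: "p \<in> V"
  shows "dP q a \<le> dP q p + dv p a"
proof -
  obtain u v t where q3: "q = (u, v, t)" by (cases q)
  note uvt = pts_triple[OF q[unfolded q3]]
  have "dv u a \<le> dv u p + dv p a" "dv v a \<le> dv v p + dv p a" using dV_triangle uvt a p by auto
  then show ?thesis unfolding q3 dPV_triple by linarith
qed

lemma dist_T_off_edge:
  "a \<noteq> b \<Longrightarrow> {u, v} \<noteq> {a, b} \<Longrightarrow>
     dT (a, b, s) (u, v, t) = min (s + dP (u, v, t) a) (len {a, b} - s + dP (u, v, t) b)"
  by (auto simp: dist_T_def seglen_def Let_def)

lemma dist_T_on_edge:
  assumes "a \<noteq> b"
  shows "dT (a, b, s) (a, b, t) =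
      min (min (s + dP (a, b, t) a) (len {a, b} - s + dP (a, b, t) b)) \<bar>s - t\<bar>"
    and "dT (a, b, s) (b, a, t) =
      min (min (s + dP (b, a, t) a) (len {a, b} - s + dP (b, a, t) b)) \<bar>s - (len {a, b} - t)\<bar>"
  using assms by (simp_all add: dist_T_def seglen_def Let_def insert_commute)

lemma side_vertex_dists:
  assumes ab: "{a, b} \<in> E" and z: "z \<in> V" and az: "side a b z"
  shows "dv z b = len {a, b} + dv z a"
    and "p \<in> V \<Longrightarrow> side b a p \<Longrightarrow> dv z p = dv z a + dv a p"
proof -
  have V: "a \<in> V" "b \<in> V" using edge_endpoints[OF ab] by auto
  show "dv z b = len {a, b} + dv z a" using az dV_sym V z unfolding side_def by simp
  assume p: "p \<in> V" "side b a p"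
  then have "dv a p = len {a, b} + dv b p" unfolding side_def by (simp add: insert_commute)
  then show "dv z p = dv z a + dv a p" using dV_across_edge[OF ab z p(1) az p(2)] by simp
qed

lemma dPV_off_edge:
  assumes ab: "{a, b} \<in> E" and q: "(u, v, t) \<in> pts V E len" and off: "{u, v} \<noteq> {a, b}"
    and au: "side a b u"
  shows "dP (u, v, t) b = len {a, b} + dP (u, v, t) a"
    and "p \<in> V \<Longrightarrow> side b a p \<Longrightarrow> dP (u, v, t) p = dP (u, v, t) a + dv a p"
proof -
  have V: "u \<in> V" "v \<in> V" using pts_triple[OF q] by auto
  have av: "side a b v"
    using au side_edge_adjacent[OF ab pts_triple(5)[OF q] off] by (cases "u = v") auto
  note u = side_vertex_dists[OF ab V(1) au] and v = side_vertex_dists[OF ab V(2) av]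
  show "dP (u, v, t) b = len {a, b} + dP (u, v, t) a"
    unfolding dPV_triple u(1) v(1) by (simp add: min_def)
  show "dP (u, v, t) p = dP (u, v, t) a + dv a p" if "p \<in> V" "side b a p"
    unfolding dPV_triple u(2)[OF that] v(2)[OF that] by (simp add: min_def)
qed

lemma dPV_on_edge:
  assumes ab: "{a, b} \<in> E" and t: "0 \<le> t" "t \<le> len {a, b}"
  shows "x \<in> V \<Longrightarrow> side a b x \<Longrightarrow> dP (a, b, t) x = t + dv a x"
    and "x \<in> V \<Longrightarrow> side b a x \<Longrightarrow> dP (a, b, t) x = len {a, b} - t + dv b x"
    and "dP (a, b, t) a = t" and "dP (a, b, t) b = len {a, b} - t"
proof -
  have ne: "a \<noteq> b" and V: "a \<in> V" "b \<in> V" using edge_endpoints[OF ab] by auto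
  have dP: "dP (a, b, t) x = min (t + dv a x) (len {a, b} - t + dv b x)" for x
    using ne by (simp add: dPV_triple seglen_def)
  have "len {a, b} > 0" using len_pos ab by simp
  then show a: "x \<in> V \<Longrightarrow> side a b x \<Longrightarrow> dP (a, b, t) x = t + dv a x"
    and b: "x \<in> V \<Longrightarrow> side b a x \<Longrightarrow> dP (a, b, t) x = len {a, b} - t + dv b x" for x
    using t unfolding dP side_def by (simp_all add: insert_commute min_def)
  have "side a b a" "side b a b" using dV_edge[OF ab] dV_sym V
    unfolding side_def dV_refl by (simp_all add: insert_commute)
  then show "dP (a, b, t) a = t" "dP (a, b, t) b = len {a, b} - t"
    using a[of a] b[of b] V dV_refl by simp_all
qed

lemma pts_edge_cases:
  assumes ab: "{a, b} \<in> E" and q: "q \<in> pts V E len"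
  obtains (fwd) t where "q = (a, b, t)" "0 \<le> t" "t \<le> len {a, b}"
    | (bwd) t where "q = (b, a, t)" "0 \<le> t" "t \<le> len {a, b}"
    | (near_a) "dP q b = len {a, b} + dP q a"
        "\<And>p. p \<in> V \<Longrightarrow> side b a p \<Longrightarrow> dP q p = dP q a + dv a p"
        "\<And>s. dT (a, b, s) q = min (s + dP q a) (len {a, b} - s + dP q b)"
    | (near_b) "dP q a = len {a, b} + dP q b"
        "\<And>p. p \<in> V \<Longrightarrow> side a b p \<Longrightarrow> dP q p = dP q b + dv b p"
        "\<And>s. dT (a, b, s) q = min (s + dP q a) (len {a, b} - s + dP q b)"
proof -
  obtain u v t where q3: "q = (u, v, t)" by (cases q)
  note uvt = pts_triple[OF q[unfolded q3]]
  have ne: "a \<noteq> b" using edge_endpoints[OF ab] by auto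
  have ba: "{b, a} = {a, b}" by blast
  show ?thesis
  proof (cases "{u, v} = {a, b}")
    case True
    then consider "u = a" "v = b" | "u = b" "v = a" by (auto simp: doubleton_eq_iff)
    then show ?thesis using that q3 uvt ne by cases (auto simp: seglen_def ba)
  next
    case False
    note dT = dist_T_off_edge[OF ne False, folded q3]
    from side_cases[OF ab uvt(1)] show ?thesis
    proof
      assume "side a b u"
      then show ?thesis using near_a dPV_off_edge[OF ab q[unfolded q3] False] q3 dT by simp
    next
      assume "side b a u"
      then show ?thesis using near_b dPV_off_edge[of b a, unfolded ba, OF ab q[unfolded q3] False] q3 dT
        by simp
    qed
  qed
qed

text \<open>The point of the segment ab nearest to q lies at distance \<open>foot a b q\<close> from a,
  and q lies at distance \<open>offset a b q\<close> beyond it.\<close>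
definition foot :: "'v \<Rightarrow> 'v \<Rightarrow> 'v point \<Rightarrow> real" where
  "foot a b q = (dP q a - dP q b + len {a, b}) / 2"

definition offset :: "'v \<Rightarrow> 'v \<Rightarrow> 'v point \<Rightarrow> real" where
  "offset a b q = (dP q a + dP q b - len {a, b}) / 2"

lemma dPV_foot_offset:
  "dP q a = foot a b q + offset a b q" "dP q b = len {a, b} - foot a b q + offset a b q"
  by (simp_all add: foot_def offset_def field_simps)

lemma foot_offset_swap: "foot b a q = len {a, b} - foot a b q" "offset b a q = offset a b q"
  by (simp_all add: foot_def offset_def insert_commute field_simps)

lemma dist_T_edge_point:
  assumes ab: "{a, b} \<in> E" and q: "q \<in> pts V E len"
  shows "0 \<le> foot a b q" "foot a b q \<le> len {a, b}" "0 \<le> offset a b q"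
    and "0 \<le> s \<Longrightarrow> s \<le> len {a, b} \<Longrightarrow> dT (a, b, s) q = \<bar>s - foot a b q\<bar> + offset a b q"
proof -
  have ne: "a \<noteq> b" and V: "a \<in> V" "b \<in> V" using edge_endpoints[OF ab] by auto
  have ba: "{b, a} = {a, b}" by blast
  let ?L = "len {a, b}"
  have "0 \<le> foot a b q \<and> foot a b q \<le> ?L \<and> 0 \<le> offset a b q \<and>
    (\<forall>s. 0 \<le> s \<longrightarrow> s \<le> ?L \<longrightarrow> dT (a, b, s) q = \<bar>s - foot a b q\<bar> + offset a b q)"
    using ab q
  proof (cases rule: pts_edge_cases)
    case (fwd t)
    then have "foot a b q = t" "offset a b q = 0"
      unfolding foot_def offset_def fwd(1) dPV_on_edge(3,4)[OF ab fwd(2,3)] by simp_all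
    then show ?thesis using fwd
      by (auto simp: dist_T_on_edge(1)[OF ne] dPV_on_edge(3,4)[OF ab fwd(2,3)])
  next
    case (bwd t)
    have "{b, a} \<in> E" using ab ba by simp
    note dP = dPV_on_edge(3,4)[OF this, unfolded ba, OF bwd(2,3)]
    have "foot a b q = ?L - t" "offset a b q = 0" unfolding foot_def offset_def bwd(1) dP by simp_all
    then show ?thesis using bwd by (auto simp: dist_T_on_edge(2)[OF ne] dP)
  next
    case near_a
    have "foot a b q = 0" "offset a b q = dP q a" unfolding foot_def offset_def near_a(1) by simp_all
    then show ?thesis using near_a(1,3) dPV_nonneg[OF q V(1)] len_pos[OF ab] by auto
  next
    case near_b
    have "foot a b q = ?L" "offset a b q = dP q b" unfolding foot_def offset_def near_b(1) by simp_all
    then show ?thesis using near_b(1,3) dPV_nonneg[OF q V(2)] len_pos[OF ab] by auto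
  qed
  then show "0 \<le> foot a b q" "foot a b q \<le> ?L" "0 \<le> offset a b q"
    and "0 \<le> s \<Longrightarrow> s \<le> ?L \<Longrightarrow> dT (a, b, s) q = \<bar>s - foot a b q\<bar> + offset a b q"
    by auto
qed


lemma foot_vpt_side:
  assumes ab: "{a, b} \<in> E" and c: "c \<in> V" and ac: "side a b c"
  shows "foot a b (vpt c) = 0" "offset a b (vpt c) = dv c a"
  using side_vertex_dists(1)[OF ab c ac] by (simp_all add: foot_def offset_def dPV_vpt)

lemma dist_T_vpt_across:
  assumes ab: "{a, b} \<in> E" and p: "p \<in> V" "side b a p" and q: "q \<in> pts V E len"
    and lt: "foot a b q < len {a, b}"
  shows "dT (vpt p) q = dv a p - foot a b q + offset a b q"
proof -
  have ba: "{b, a} = {a, b}" by blast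
  have ap: "dv a p = len {a, b} + dv b p" using p(2) unfolding side_def ba by simp
  note fo = dPV_foot_offset[where a = a and b = b]
  have "dP q p = dv a p - foot a b q + offset a b q" using ab q
  proof (cases rule: pts_edge_cases)
    case (fwd t)
    then show ?thesis using dPV_on_edge(2)[OF ab fwd(2,3) p] fo dPV_on_edge(3,4)[OF ab fwd(2,3)] ap
      by simp
  next
    case (bwd t)
    have "{b, a} \<in> E" using ab ba by simp
    note dP = dPV_on_edge[OF this, unfolded ba, OF bwd(2,3)]
    show ?thesis using dP(1)[OF p] dP(3,4) fo ap bwd(1) by simp
  next
    case near_a
    then show ?thesis using p fo by simp
  next
    case near_b
    then have "foot a b q = len {a, b}" by (simp add: foot_def)
    then show ?thesis using lt by simp
  qed
  then show ?thesis by (simp add: dist_T_vpt)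
qed

text \<open>A point of T has several representations: \<open>(a, b, 0)\<close>, \<open>(b, a, len {a, b})\<close> and
  \<open>vpt a\<close> all denote the vertex a.\<close>
definition same_point :: "'v point \<Rightarrow> 'v point \<Rightarrow> bool" where
  "same_point x y \<longleftrightarrow> (\<forall>q \<in> pts V E len. dT x q = dT y q)"

lemma same_point_refl: "same_point x x"
  unfolding same_point_def by simp

lemma same_point_edge_start:
  assumes ab: "{a, b} \<in> E"
  shows "same_point (a, b, 0) (vpt a)"
  unfolding same_point_def
proof
  fix q assume q: "q \<in> pts V E len"
  have "0 \<le> len {a, b}" using len_pos[OF ab] by simp
  then show "dT (a, b, 0) q = dT (vpt a) q"
    using dist_T_edge_point[OF ab q] dPV_foot_offset(1)[of q a b] by (simp add: dist_T_vpt)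
qed

lemma same_point_edge_end:
  assumes ab: "{a, b} \<in> E"
  shows "same_point (a, b, len {a, b}) (vpt b)"
  unfolding same_point_def
proof
  fix q assume q: "q \<in> pts V E len"
  have "0 \<le> len {a, b}" using len_pos[OF ab] by simp
  then show "dT (a, b, len {a, b}) q = dT (vpt b) q"
    using dist_T_edge_point[OF ab q] dPV_foot_offset(2)[where a = a and b = b and q = q]
    by (simp add: dist_T_vpt)
qed

lemma same_point_flip:
  assumes ab: "{a, b} \<in> E" and s: "0 \<le> s" "s \<le> len {a, b}"
  shows "same_point (a, b, s) (b, a, len {a, b} - s)"
  unfolding same_point_def
proof
  fix q assume q: "q \<in> pts V E len"
  have ba: "{b, a} = {a, b}" by blast
  have "{b, a} \<in> E" using ab ba by simp
  from dist_T_edge_point(4)[OF this q, unfolded ba] dist_T_edge_point(4)[OF ab q] s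
  show "dT (a, b, s) q = dT (b, a, len {a, b} - s) q"
    by (simp add: foot_offset_swap[where a = a and b = b])
qed

lemma on_path_edge_point:
  assumes ab: "{a, b} \<in> E" and t: "0 \<le> t" "t \<le> len {a, b}" and p: "p \<in> V" "side b a p"
    and p': "p' \<in> V" "side a b p'"
  shows "on_path E len (vpt p) (vpt p') (a, b, t)"
proof -
  have "dT (vpt p) (a, b, t) = len {a, b} - t + dv b p"
    using dPV_on_edge(2)[OF ab t p] dist_T_vpt by simp
  moreover have "dT (a, b, t) (vpt p') = t + dv p' a"
    using dist_T_edge_point(4)[OF ab vpt_in_pts[OF p'(1)] t] foot_vpt_side[OF ab p'] t by simp
  moreover have "dT (vpt p) (vpt p') = dv p' a + len {a, b} + dv b p"
    using dV_across_edge[OF ab p'(1) p(1) p'(2) p(2)] by (simp add: dist_T_vpt dPV_vpt)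
  ultimately show ?thesis unfolding on_path_def by simp
qed

lemma reposition_towards:
  assumes x: "x \<in> pts V E len" and p: "p \<in> V" and ne: "\<not> same_point x (vpt p)"
  obtains a b t where "{a, b} \<in> E" "0 \<le> t" "t < len {a, b}" "same_point x (a, b, t)" "side b a p"
proof -
  note result = that
  have vertex: thesis if c: "c \<in> V" "same_point x (vpt c)" for c
  proof -
    have "c \<noteq> p" using ne c by auto
    then obtain c' where c': "{c, c'} \<in> E" "side c' c p" using first_step_towards c(1) p by blast
    have "same_point x (c, c', 0)"
      using c(2) same_point_edge_start[OF c'(1)] unfolding same_point_def by simp
    then show thesis using result c' len_pos[OF c'(1)] by auto
  qed
  obtain u v t where q3: "x = (u, v, t)" by (cases x)
  show thesis
  proof (cases "u = v")
    case True
    then have "x = vpt u" "u \<in> V" using q3 pts_triple[OF x[unfolded q3]] by (simp_all add: vpt_def seglen_def)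
    then show thesis using vertex same_point_refl by blast
  next
    case False
    have uv: "{u, v} \<in> E" "0 \<le> t" "t \<le> len {u, v}"
      using pts_triple[OF x[unfolded q3]] False by (simp_all add: seglen_def)
    have vu: "{v, u} \<in> E" "len {v, u} = len {u, v}" using uv(1) by (simp_all add: insert_commute)
    from side_cases[OF uv(1) p] show thesis
    proof
      assume "side v u p"
      then show thesis
        using result[OF uv(1,2)] vertex[of v] same_point_edge_end[OF uv(1)] q3 uv pts_triple[OF x[unfolded q3]]
          same_point_refl by (cases "t = len {u, v}") auto
    next
      assume up: "side u v p"
      show thesis
      proof (cases "t = 0")
        case True
        then show thesis using vertex[of u] same_point_edge_start[OF uv(1)] q3 uv edge_endpoints by simp
      next
        case False
        then show thesis using result[OF vu(1), of "len {u, v} - t"] same_point_flip[OF uv] q3 uv vu up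
          by simp
      qed
    qed
  qed
qed

text \<open>Convexity of \<open>dT \<cdot> q\<close> along the path from \<open>(a, b, t)\<close> to p, for steps that do not
  overshoot the foot of q.\<close>
lemma dist_T_convex_step:
  assumes ab: "{a, b} \<in> E" and p: "p \<in> V" "side b a p" and q: "q \<in> pts V E len"
    and t: "0 \<le> t" "0 < s" "t + s \<le> len {a, b}"
    and short: "foot a b q > t \<Longrightarrow> s \<le> foot a b q - t"
  shows "(dv a p - t) * (dT (a, b, t + s) q - dT (a, b, t) q) \<le> s * (dT (vpt p) q - dT (a, b, t) q)"
proof -
  have V: "a \<in> V" using edge_endpoints ab by auto
  have y: "dT (a, b, t + s) q = \<bar>t + s - foot a b q\<bar> + offset a b q"
    and x: "dT (a, b, t) q = \<bar>t - foot a b q\<bar> + offset a b q"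
    using dist_T_edge_point(4)[OF ab q] t by auto
  show ?thesis
  proof (cases "foot a b q \<le> t")
    case True
    then have "dT (vpt p) q = dv a p - foot a b q + offset a b q"
      using dist_T_vpt_across[OF ab p q] t by simp
    then have "dT (vpt p) q - dT (a, b, t) q = dv a p - t"
      and "dT (a, b, t + s) q - dT (a, b, t) q = s" using x y True t by simp_all
    then show ?thesis by simp
  next
    case False
    have "dP q a \<le> dP q p + dv p a" using dPV_triangle[OF q V p(1)] .
    then have "dT (vpt p) q - dT (a, b, t) q \<ge> t - dv a p"
      using x False dPV_foot_offset(1)[of q a b] dV_sym[OF V p(1)] by (simp add: dist_T_vpt)
    then have "s * (dT (vpt p) q - dT (a, b, t) q) \<ge> s * (t - dv a p)" using t by simp
    moreover have "dT (a, b, t + s) q - dT (a, b, t) q = - s" using x y False short by simp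
    moreover have "(dv a p - t) * (- s) = s * (t - dv a p)" by (simp add: algebra_simps)
    ultimately show ?thesis by simp
  qed
qed

end

section \<open>Expected distances\<close>

locale uncertain_points = weighted_tree V E len for V :: "'v set" and E and len +
  fixes n :: nat and w :: "nat \<Rightarrow> real" and m :: "nat \<Rightarrow> nat"
    and loc :: "nat \<Rightarrow> nat \<Rightarrow> 'v point" and f :: "nat \<Rightarrow> nat \<Rightarrow> real"
  assumes weight_nonneg: "\<And>i. i \<in> {1..n} \<Longrightarrow> w i \<ge> 0"
    and loc_in_pts: "\<And>i j. i \<in> {1..n} \<Longrightarrow> j < m i \<Longrightarrow> loc i j \<in> pts V E len"
    and prob_nonneg: "\<And>i j. i \<in> {1..n} \<Longrightarrow> j < m i \<Longrightarrow> f i j \<ge> 0"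
    and prob_sum: "\<And>i. i \<in> {1..n} \<Longrightarrow> (\<Sum>j < m i. f i j) = 1"
begin

abbreviation cost where "cost i x \<equiv> Ed E len w m loc f x i"

lemma cost_same_point: "same_point x y \<Longrightarrow> i \<in> {1..n} \<Longrightarrow> cost i x = cost i y"
  unfolding Ed_def same_point_def using loc_in_pts by (auto intro!: sum.cong)

lemma cost_edge_point:
  assumes ab: "{a, b} \<in> E" and i: "i \<in> {1..n}" and s: "0 \<le> s" "s \<le> len {a, b}"
  shows "cost i (a, b, s) =
    w i * (\<Sum>j<m i. f i j * (\<bar>s - foot a b (loc i j)\<bar> + offset a b (loc i j)))"
  unfolding Ed_def using dist_T_edge_point(4)[OF ab loc_in_pts[OF i] s] by simp

lemma cost_lipschitz:
  assumes ab: "{a, b} \<in> E" and i: "i \<in> {1..n}" and t: "0 \<le> t" "0 \<le> s" "t + s \<le> len {a, b}"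
  shows "cost i (a, b, t + s) \<le> cost i (a, b, t) + s * w i"
proof -
  define S where "S r = (\<Sum>j<m i. f i j * (\<bar>r - foot a b (loc i j)\<bar> + offset a b (loc i j)))" for r
  have "S (t + s) \<le> (\<Sum>j<m i. f i j * (\<bar>t - foot a b (loc i j)\<bar> + offset a b (loc i j)) + f i j * s)"
    unfolding S_def using prob_nonneg[OF i] t
    by (intro sum_mono) (simp add: mult_left_mono flip: distrib_left)
  also have "\<dots> = S t + s"
    unfolding S_def using prob_sum[OF i] by (simp add: sum.distrib flip: sum_distrib_right)
  finally have "w i * S (t + s) \<le> w i * (S t + s)" using weight_nonneg[OF i] by (rule mult_left_mono)
  then show ?thesis using cost_edge_point[OF ab i] t unfolding S_def by (simp add: algebra_simps)
qed


lemma cost_convex_step: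
  assumes i: "i \<in> {1..n}" and ab: "{a, b} \<in> E" and p: "p \<in> V" "side b a p"
    and t: "0 \<le> t" "0 < s" "t + s \<le> len {a, b}"
    and short: "\<And>j. j < m i \<Longrightarrow> foot a b (loc i j) > t \<Longrightarrow> s \<le> foot a b (loc i j) - t"
  shows "(dv a p - t) * (cost i (a, b, t + s) - cost i (a, b, t)) \<le> s * (cost i (vpt p) - cost i (a, b, t))"
proof -
  define D where "D x = (\<Sum>j<m i. f i j * dT x (loc i j))" for x
  have lin: "(\<Sum>j<m i. f i j * (c * (dT x (loc i j) - dT y (loc i j)))) = c * (D x - D y)" for c x y
    unfolding D_def by (simp add: sum_distrib_left sum_subtractf[symmetric] algebra_simps)
  have "(\<Sum>j<m i. f i j * ((dv a p - t) * (dT (a, b, t + s) (loc i j) - dT (a, b, t) (loc i j))))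
      \<le> (\<Sum>j<m i. f i j * (s * (dT (vpt p) (loc i j) - dT (a, b, t) (loc i j))))"
    using dist_T_convex_step[OF ab p loc_in_pts[OF i] t short] prob_nonneg[OF i]
    by (intro sum_mono mult_left_mono) auto
  then have "w i * ((dv a p - t) * (D (a, b, t + s) - D (a, b, t)))
      \<le> w i * (s * (D (vpt p) - D (a, b, t)))"
    unfolding lin using weight_nonneg[OF i] by (rule mult_left_mono)
  then show ?thesis unfolding Ed_def D_def by (simp add: algebra_simps)
qed

lemma cost_eventually_below:
  assumes ab: "{a, b} \<in> E" and i: "i \<in> {1..n}" and t: "0 \<le> t" "t < len {a, b}"
    and below: "cost i (a, b, t) < H"
  shows "eventually (\<lambda>s. cost i (a, b, t + s) < H) (at_right 0)"
proof -
  define c where "c = min (len {a, b} - t) ((H - cost i (a, b, t)) / (w i + 1))"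
  have w: "w i \<ge> 0" using weight_nonneg[OF i] .
  have "c > 0" unfolding c_def using below t w by auto
  from eventually_small_step[OF this] show ?thesis
  proof (rule eventually_mono)
    fix s assume s: "0 < s \<and> s < c"
    then have "s * (w i + 1) < H - cost i (a, b, t)" using w by (simp add: c_def field_simps)
    moreover have "cost i (a, b, t + s) \<le> cost i (a, b, t) + s * w i"
      using cost_lipschitz[OF ab i t(1)] s by (simp add: c_def)
    ultimately show "cost i (a, b, t + s) < H" using s by (simp add: algebra_simps)
  qed
qed

lemma cost_eventually_decreasing:
  assumes ab: "{a, b} \<in> E" and i: "i \<in> {1..n}" and t: "0 \<le> t" "t < len {a, b}"
    and p: "p \<in> V" "side b a p" and lower: "cost i (vpt p) < cost i (a, b, t)"
  shows "eventually (\<lambda>s. cost i (a, b, t + s) < cost i (a, b, t)) (at_right 0)"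
proof -
  have "dv a p = len {a, b} + dv b p" using p(2) unfolding side_def by (simp add: insert_commute)
  moreover have "dv b p \<ge> 0" using dV_nonneg p edge_endpoints[OF ab] by auto
  ultimately have \<delta>: "dv a p - t > 0" using t by simp
  have "eventually (\<lambda>s. foot a b (loc i j) > t \<longrightarrow> s \<le> foot a b (loc i j) - t) (at_right 0)" for j
    using eventually_small_step[of "foot a b (loc i j) - t"] by (cases "foot a b (loc i j) > t") (auto elim: eventually_mono)
  then have "eventually (\<lambda>s. \<forall>j\<in>{..<m i}. foot a b (loc i j) > t \<longrightarrow> s \<le> foot a b (loc i j) - t) (at_right 0)"
    by (simp add: eventually_ball_finite)
  moreover have "eventually (\<lambda>s. 0 < s \<and> s < len {a, b} - t) (at_right 0)"
    using eventually_small_step t by simp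
  ultimately show ?thesis
  proof (rule eventually_elim2)
    fix s assume short: "\<forall>j\<in>{..<m i}. foot a b (loc i j) > t \<longrightarrow> s \<le> foot a b (loc i j) - t"
      and s: "0 < s \<and> s < len {a, b} - t"
    have "(dv a p - t) * (cost i (a, b, t + s) - cost i (a, b, t)) < 0"
      using cost_convex_step[OF i ab p t(1)] short s lower
      by (smt (verit, best) lessThan_iff mult_pos_neg)
    then show "cost i (a, b, t + s) < cost i (a, b, t)" using \<delta> by (simp add: mult_less_0_iff)
  qed
qed


definition group_cost :: "nat set \<Rightarrow> 'v point \<Rightarrow> real" where
  "group_cost I x = Max ((\<lambda>i. cost i x) ` I)"

lemma group_cost_step_down:
  assumes I: "I \<subseteq> {1..n}" "I \<noteq> {}" and ab: "{a, b} \<in> E" and t: "0 \<le> t" "t < len {a, b}"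
    and le_H: "\<And>i. i \<in> I \<Longrightarrow> cost i (a, b, t) \<le> H"
    and active: "\<And>i. i \<in> I \<Longrightarrow> cost i (a, b, t) = H \<Longrightarrow>
      p i \<in> V \<and> side b a (p i) \<and> cost i (vpt (p i)) < H"
  obtains s where "(a, b, t + s) \<in> pts V E len" "group_cost I (a, b, t + s) < H"
proof -
  have finI: "finite I" using I(1) finite_subset by blast
  have ev: "eventually (\<lambda>s. cost i (a, b, t + s) < H) (at_right 0)" if i: "i \<in> I" for i
  proof -
    have "i \<in> {1..n}" using i I by auto
    show ?thesis
    proof (cases "cost i (a, b, t) < H")
      case True
      then show ?thesis using cost_eventually_below[OF ab \<open>i \<in> {1..n}\<close> t] by simp
    next
      case False
      then have "cost i (a, b, t) = H" using le_H[OF i] by simp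
      with active[OF i this] cost_eventually_decreasing[OF ab \<open>i \<in> {1..n}\<close> t, of "p i"]
      show ?thesis by simp
    qed
  qed
  have "eventually (\<lambda>s. \<forall>i\<in>I. cost i (a, b, t + s) < H) (at_right 0)"
    using finI ev by (simp add: eventually_ball_finite)
  moreover have "eventually (\<lambda>s. 0 < s \<and> s < len {a, b} - t) (at_right 0)"
    using eventually_small_step t by simp
  moreover have "at_right (0::real) \<noteq> bot"
    using trivial_limit_at_right_real by (simp add: eventually_const_iff)
  ultimately obtain s where s: "\<forall>i\<in>I. cost i (a, b, t + s) < H" "0 < s" "s < len {a, b} - t"
    using eventually_happens' eventually_conj by blast
  have "group_cost I (a, b, t + s) < H" unfolding group_cost_def using s(1) finI I(2) by simp
  moreover have "(a, b, t + s) \<in> pts V E len" using pts_edge[OF ab] s t by simp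
  ultimately show thesis using that by blast
qed

lemma group_cost_minimum:
  assumes I: "I \<subseteq> {1..n}" "I \<noteq> {}" and x: "x \<in> pts V E len"
    and xmin: "\<And>y. y \<in> pts V E len \<Longrightarrow> group_cost I x \<le> group_cost I y"
    and med_V: "\<And>i. i \<in> I \<Longrightarrow> pstar i \<in> V"
    and med_min: "\<And>i y. i \<in> I \<Longrightarrow> y \<in> pts V E len \<Longrightarrow> cost i (vpt (pstar i)) \<le> cost i y"
  shows "(\<exists>i\<in>I. group_cost I x = cost i (vpt (pstar i)))
    \<or> (\<exists>i\<in>I. \<exists>j\<in>I. \<exists>c\<in>pts V E len. on_path E len (vpt (pstar i)) (vpt (pstar j)) c
          \<and> cost i c = cost j c \<and> group_cost I x = cost i c)"
proof (rule ccontr)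
  assume none: "\<not> ?thesis"
  define H where "H = group_cost I x"
  have finI: "finite I" using I(1) finite_subset by blast
  have "H \<in> (\<lambda>i. cost i x) ` I" unfolding H_def group_cost_def using finI I(2) by simp
  then obtain i1 where i1: "i1 \<in> I" "cost i1 x = H" by auto
  have med_below: "cost i (vpt (pstar i)) < H" if "i \<in> I" "cost i x = H" for i
    using med_min[OF that(1) x] none that unfolding H_def by force
  have "\<not> same_point x (vpt (pstar i1))"
    using cost_same_point[of x "vpt (pstar i1)" i1] med_below[OF i1] i1 I by auto
  then obtain a b t where ab: "{a, b} \<in> E" and t: "0 \<le> t" "t < len {a, b}"
    and xt: "same_point x (a, b, t)" and p1: "side b a (pstar i1)"
    using reposition_towards[OF x med_V[OF i1(1)]] by blast
  have cost_xt: "cost i (a, b, t) = cost i x" if "i \<in> I" for i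
    using cost_same_point[OF xt] that I by auto
  have beyond: "side b a (pstar j)" if j: "j \<in> I" "cost j x = H" for j
  proof (rule ccontr)
    assume "\<not> side b a (pstar j)"
    then have "side a b (pstar j)" using side_cases[OF ab med_V[OF j(1)]] by blast
    then have "on_path E len (vpt (pstar i1)) (vpt (pstar j)) (a, b, t)"
      using on_path_edge_point[OF ab t(1) _ med_V[OF i1(1)] p1 med_V[OF j(1)]] t by simp
    moreover have "(a, b, t) \<in> pts V E len" using pts_edge[OF ab] t by simp
    ultimately show False using none i1 j cost_xt unfolding H_def by metis
  qed
  obtain s where "(a, b, t + s) \<in> pts V E len" "group_cost I (a, b, t + s) < H"
  proof (rule group_cost_step_down[OF I ab t, of H pstar])
    show "cost i (a, b, t) \<le> H" if "i \<in> I" for i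
      unfolding cost_xt[OF that] H_def group_cost_def using finI that by simp
    show "pstar i \<in> V \<and> side b a (pstar i) \<and> cost i (vpt (pstar i)) < H"
      if "i \<in> I" "cost i (a, b, t) = H" for i
      using med_V beyond med_below that cost_xt by simp
  qed
  then show False using xmin unfolding H_def by fastforce
qed

lemma group_cost_continuous_on_edge:
  assumes ab: "{a, b} \<in> E" and I: "I \<subseteq> {1..n}" "I \<noteq> {}"
  shows "continuous_on {0..len {a, b}} (\<lambda>s. group_cost I (a, b, s))"
proof -
  define G where "G i s = w i * (\<Sum>j<m i. f i j * (\<bar>s - foot a b (loc i j)\<bar> + offset a b (loc i j)))"
    for i s
  have "continuous_on {0..len {a, b}} (\<lambda>s. Max ((\<lambda>i. G i s) ` I))"
    using I finite_subset by (intro continuous_on_Max_image) (auto simp: G_def intro!: continuous_intros)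
  moreover have "group_cost I (a, b, s) = Max ((\<lambda>i. G i s) ` I)" if "s \<in> {0..len {a, b}}" for s
  proof -
    have "cost i (a, b, s) = G i s" if "i \<in> I" for i
      using cost_edge_point[OF ab] I that \<open>s \<in> {0..len {a, b}}\<close> by (auto simp: G_def)
    then show ?thesis unfolding group_cost_def by (simp cong: image_cong)
  qed
  ultimately show ?thesis using continuous_on_cong by (metis (no_types, lifting))
qed

text \<open>The minimum over T is the minimum over the vertices and the minima on the edges,
  each of which exists by continuity on a compact segment.\<close>
lemma group_cost_has_minimum:
  assumes I: "I \<subseteq> {1..n}" "I \<noteq> {}"
  shows "\<exists>x\<in>pts V E len. \<forall>y\<in>pts V E len. group_cost I x \<le> group_cost I y"
proof -
  have "\<exists>s\<in>{0..len {a, b}}. \<forall>t\<in>{0..len {a, b}}. group_cost I (a, b, s) \<le> group_cost I (a, b, t)"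
    if ab: "{a, b} \<in> E" for a b
    using continuous_attains_inf[OF compact_Icc _ group_cost_continuous_on_edge[OF ab I]] len_pos[OF ab]
    by simp
  then obtain sel where sel: "\<And>a b. {a, b} \<in> E \<Longrightarrow> sel a b \<in> {0..len {a, b}} \<and>
      (\<forall>t\<in>{0..len {a, b}}. group_cost I (a, b, sel a b) \<le> group_cost I (a, b, t))"
    by metis
  define C where "C = vpt ` V \<union> (\<lambda>(a, b). (a, b, sel a b)) ` {(a, b) \<in> V \<times> V. {a, b} \<in> E}"
  have "finite {(a, b) \<in> V \<times> V. {a, b} \<in> E}" by (rule finite_subset[of _ "V \<times> V"]) (auto simp: finite_V)
  then have "finite C" "C \<noteq> {}" unfolding C_def using finite_V V_nonempty by auto
  then have "Min (group_cost I ` C) \<in> group_cost I ` C" by simp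
  then obtain x where x: "x \<in> C" "group_cost I x = Min (group_cost I ` C)" by auto
  have min: "group_cost I x \<le> group_cost I y" if "y \<in> C" for y
    using x(2) \<open>finite C\<close> that by simp
  have "x \<in> pts V E len" using x(1) sel unfolding C_def by (auto simp: pts_def)
  moreover have "group_cost I x \<le> group_cost I y" if "y \<in> pts V E len" for y
  proof -
    from that consider c where "c \<in> V" "y = vpt c"
      | a b t where "y = (a, b, t)" "{a, b} \<in> E" "0 \<le> t" "t \<le> len {a, b}"
      unfolding pts_def by auto
    then show ?thesis
    proof cases
      case (2 a b t)
      then have "(a, b, sel a b) \<in> C" using edge_endpoints unfolding C_def by force
      then show ?thesis using min sel[OF 2(2)] 2 by (meson atLeastAtMost_iff order_trans)
    qed (use min C_def in blast)
  qed
  ultimately show ?thesis by blast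
qed


section \<open>The optimal k-center value\<close>

text \<open>Arbitrary when I is empty.\<close>
definition center :: "nat set \<Rightarrow> 'v point" where
  "center I = (SOME x. x \<in> pts V E len \<and> (\<forall>y\<in>pts V E len. group_cost I x \<le> group_cost I y))"

lemma center_is_minimum:
  assumes "I \<subseteq> {1..n}" "I \<noteq> {}"
  shows "center I \<in> pts V E len" "\<And>y. y \<in> pts V E len \<Longrightarrow> group_cost I (center I) \<le> group_cost I y"
proof -
  have "\<exists>x. x \<in> pts V E len \<and> (\<forall>y\<in>pts V E len. group_cost I x \<le> group_cost I y)"
    using group_cost_has_minimum[OF assms] by blast
  from someI_ex[OF this, folded center_def]
  show "center I \<in> pts V E len" "\<And>y. y \<in> pts V E len \<Longrightarrow> group_cost I (center I) \<le> group_cost I y"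
    by auto
qed

abbreviation kc where "kc C \<equiv> kcost E len n w m loc f C"

lemma kcost_ge_nearest:
  assumes "i \<in> {1..n}"
  shows "Min ((\<lambda>c. cost i c) ` C) \<le> kc C"
  unfolding kcost_def by (rule Max_ge) (use assms in simp_all)

lemma kcost_le:
  assumes n: "n \<ge> 1" and C: "finite C" and near: "\<And>i. i \<in> {1..n} \<Longrightarrow> \<exists>c\<in>C. cost i c \<le> r"
  shows "kc C \<le> r"
  unfolding kcost_def
proof (rule Max.boundedI)
  fix v assume "v \<in> (\<lambda>i. Min ((\<lambda>c. cost i c) ` C)) ` {1..n}"
  then obtain i c where "i \<in> {1..n}" "v = Min ((\<lambda>c. cost i c) ` C)" "c \<in> C" "cost i c \<le> r"
    using near by blast
  then show "v \<le> r" using C by (meson Min_le finite_imageI imageI order_trans)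
qed (use n in auto)

lemma group_cost_center_le_kcost:
  assumes J: "J \<subseteq> {1..n}" "J \<noteq> {}" and C: "C \<subseteq> pts V E len" "c \<in> C"
    and nearest: "\<And>j. j \<in> J \<Longrightarrow> cost j c = Min ((\<lambda>c. cost j c) ` C)"
  shows "group_cost J (center J) \<le> kc C"
proof -
  have "group_cost J (center J) \<le> group_cost J c" using center_is_minimum(2)[OF J] C by blast
  also have "\<dots> \<le> kc C" unfolding group_cost_def
  proof (rule Max.boundedI)
    fix v assume "v \<in> (\<lambda>j. cost j c) ` J"
    then obtain j where "j \<in> J" "v = cost j c" by blast
    then show "v \<le> kc C" using kcost_ge_nearest[of j C] nearest J(1) by auto
  qed (use J finite_subset in auto)
  finally show ?thesis .
qed

text \<open>Grouping the uncertain points by their nearest center in C, and replacing every group by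
  its optimal 1-center, does not increase the cost; the new cost is the largest 1-center value
  of a group.\<close>
lemma kcost_cluster_bound:
  assumes n: "n \<ge> 1" and C: "C \<subseteq> pts V E len" "C \<noteq> {}" "finite C" "card C \<le> k"
  obtains I C' where "I \<subseteq> {1..n}" "I \<noteq> {}" "group_cost I (center I) \<le> kc C"
    "C' \<subseteq> pts V E len" "C' \<noteq> {}" "finite C'" "card C' \<le> k" "kc C' \<le> group_cost I (center I)"
proof -
  have "\<forall>i. \<exists>c\<in>C. cost i c = Min ((\<lambda>c. cost i c) ` C)"
    using C(2,3) by (metis (no_types, lifting) Min_in finite_imageI image_iff image_is_empty)
  then obtain \<sigma> where \<sigma>: "\<And>i. \<sigma> i \<in> C" "\<And>i. cost i (\<sigma> i) = Min ((\<lambda>c. cost i c) ` C)" by metis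
  define cluster where "cluster i = {j \<in> {1..n}. \<sigma> j = \<sigma> i}" for i
  have cluster: "cluster i \<subseteq> {1..n}" "cluster i \<noteq> {}" "finite (cluster i)" if "i \<in> {1..n}" for i
    using that unfolding cluster_def by auto
  define val where "val i = group_cost (cluster i) (center (cluster i))" for i
  have val_le: "val i \<le> kc C" if i: "i \<in> {1..n}" for i
    unfolding val_def
  proof (rule group_cost_center_le_kcost[OF cluster(1,2)[OF i] C(1) \<sigma>(1)])
    fix j assume "j \<in> cluster i"
    then show "cost j (\<sigma> i) = Min ((\<lambda>c. cost j c) ` C)" using \<sigma>(2)[of j] by (simp add: cluster_def)
  qed
  have "Max (val ` {1..n}) \<in> val ` {1..n}" using n by simp
  then obtain i0 where i0: "i0 \<in> {1..n}" "val i0 = Max (val ` {1..n})" by auto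
  then have i0_max: "val i \<le> val i0" if "i \<in> {1..n}" for i using that by simp
  define C' where "C' = (\<lambda>i. center (cluster i)) ` {1..n}"
  have "C' = (\<lambda>c. center {j \<in> {1..n}. \<sigma> j = c}) ` \<sigma> ` {1..n}"
    unfolding C'_def cluster_def by (simp add: image_image)
  then have "card C' \<le> card (\<sigma> ` {1..n})" by (simp add: card_image_le)
  also have "\<dots> \<le> card C" using \<sigma>(1) C(3) by (intro card_mono) auto
  finally have "card C' \<le> k" using C(4) by simp
  moreover have "kc C' \<le> val i0"
  proof (rule kcost_le[OF n])
    fix i assume i: "i \<in> {1..n}"
    have "cost i (center (cluster i)) \<le> val i"
      unfolding val_def group_cost_def using cluster[OF i] i by (auto simp: cluster_def)
    moreover have "center (cluster i) \<in> C'" unfolding C'_def using i by simp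
    ultimately show "\<exists>c\<in>C'. cost i c \<le> val i0" using i0_max[OF i] by (blast intro: order_trans)
  qed (simp add: C'_def)
  moreover have "C' \<subseteq> pts V E len" "C' \<noteq> {}" "finite C'"
    using center_is_minimum(1)[OF cluster(1,2)] n unfolding C'_def by auto
  ultimately show thesis
    using that[OF cluster(1,2)[OF i0(1)] val_le[OF i0(1), unfolded val_def]] unfolding val_def by simp
qed

lemma lambda_opt_eq_center_value:
  assumes n: "n \<ge> 1" and k: "k \<ge> 1"
  obtains I where "I \<subseteq> {1..n}" "I \<noteq> {}"
    "lambda_opt V E len k n w m loc f = group_cost I (center I)"
proof -
  define A where "A = {C. C \<subseteq> pts V E len \<and> C \<noteq> {} \<and> finite C \<and> card C \<le> k}"
  define vals where "vals = {group_cost I (center I) | I. I \<subseteq> {1..n} \<and> I \<noteq> {}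
    \<and> (\<exists>C\<in>A. kc C \<le> group_cost I (center I))}"
  have below: "\<exists>v\<in>vals. v \<le> kc C" if "C \<in> A" for C
    using kcost_cluster_bound[OF n, of C] that unfolding A_def vals_def by (smt (verit) mem_Collect_eq)
  have "finite vals"
    by (rule finite_subset[of _ "(\<lambda>I. group_cost I (center I)) ` Pow {1..n}"]) (auto simp: vals_def)
  obtain c where "c \<in> V" using V_nonempty by auto
  then have "{vpt c} \<in> A" unfolding A_def using k vpt_in_pts by simp
  then have "vals \<noteq> {}" using below by blast
  define v0 where "v0 = Min vals"
  have v0: "v0 \<in> vals" unfolding v0_def using \<open>finite vals\<close> \<open>vals \<noteq> {}\<close> by simp
  have lower: "v0 \<le> kc C" if "C \<in> A" for C
    using below[OF that] \<open>finite vals\<close> unfolding v0_def by (meson Min_le order_trans)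
  obtain I C where I: "I \<subseteq> {1..n}" "I \<noteq> {}" "v0 = group_cost I (center I)"
    and C: "C \<in> A" "kc C \<le> v0" using v0 unfolding vals_def by blast
  have "Inf (kc ` A) = v0"
  proof (rule antisym)
    show "Inf (kc ` A) \<le> v0" using C lower by (intro cInf_lower2[of "kc C"]) (auto intro!: bdd_belowI)
    show "v0 \<le> Inf (kc ` A)" using \<open>{vpt c} \<in> A\<close> lower by (intro cInf_greatest) auto
  qed
  then show thesis using that I unfolding lambda_opt_def A_def by simp
qed

end

theorem mainTheorem7:
  fixes V :: "'v set" and E :: "'v set set" and len :: "'v set \<Rightarrow> real"
    and k n :: nat and w :: "nat \<Rightarrow> real" and m :: "nat \<Rightarrow> nat"
    and loc :: "nat \<Rightarrow> nat \<Rightarrow> 'v point" and f :: "nat \<Rightarrow> nat \<Rightarrow> real"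
    and pstar :: "nat \<Rightarrow> 'v"
  assumes tree: "is_tree V E len"
    and k: "k \<ge> 1" and n: "n \<ge> 1"
    and w: "\<And>i. i \<in> {1..n} \<Longrightarrow> w i \<ge> 0"
    and loc: "\<And>i j. i \<in> {1..n} \<Longrightarrow> j < m i \<Longrightarrow> loc i j \<in> pts V E len"
    and fnn: "\<And>i j. i \<in> {1..n} \<Longrightarrow> j < m i \<Longrightarrow> f i j \<ge> 0"
    and fsum: "\<And>i. i \<in> {1..n} \<Longrightarrow> (\<Sum>j < m i. f i j) = 1"
    and med_vertex: "\<And>i. i \<in> {1..n} \<Longrightarrow> pstar i \<in> V"
    and med_min: "\<And>i x. i \<in> {1..n} \<Longrightarrow> x \<in> pts V E len \<Longrightarrow>
        Ed E len w m loc f (vpt (pstar i)) i \<le> Ed E len w m loc f x i"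
  shows "(\<exists>i\<in>{1..n}. lambda_opt V E len k n w m loc f = Ed E len w m loc f (vpt (pstar i)) i)
       \<or> (\<exists>i\<in>{1..n}. \<exists>j\<in>{1..n}. \<exists>c\<in>pts V E len.
            on_path E len (vpt (pstar i)) (vpt (pstar j)) c
            \<and> Ed E len w m loc f c i = Ed E len w m loc f c j
            \<and> lambda_opt V E len k n w m loc f = Ed E len w m loc f c i)"
proof -
  interpret uncertain_points V E len n w m loc f
    by unfold_locales (use tree w loc fnn fsum in auto)
  obtain I where I: "I \<subseteq> {1..n}" "I \<noteq> {}"
    and lam: "lambda_opt V E len k n w m loc f = group_cost I (center I)"
    using lambda_opt_eq_center_value[OF n k] by blast
  from group_cost_minimum[OF I center_is_minimum[OF I]] med_vertex med_min I(1)
  show ?thesis unfolding lam by blast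
qed

end
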